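(* Let $w\in\mathbb R^n_{\ge0}$ and let $\eta$ be as defined below. Then: (i) $\eta$ is non-decreasing on $[0,n]$; (ii) $\eta(ah)\le 2a\,\eta(h)$ for all $a\ge1$ and $h\in[1,n/a]$; (iii) if $X\sim\mathrm{Bin}(m,p)$ is a binomial random variable with $1\le mp\le m\le n$, then $\mathbb E[\eta(X)]\le 3\,\eta(mp)$.
   Context: For $a\in[0,n]$, $\eta(a)$ is the expected value of $\max_{i\in R}w_i$, where $R$ is a uniformly random subset of $\{1,\dots,n\}$ of size $\lfloor a\rfloor$ (without repetition); by convention $\eta(a)=0$ for $a\in[0,1)$. *)

theory Defs
  imports "HOL-Probability.Probability"
begin

definition eta :: "(nat \<Rightarrow> real) \<Rightarrow> nat \<Rightarrow> real \<Rightarrow> real" where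
  "eta w n a =
     (if a < 1 then 0
      else (let k = nat \<lfloor>a\<rfloor> in
              (\<Sum>R\<in>{R. R \<subseteq> {1..n} \<and> card R = k}. Max (w ` R)) / real (n choose k)))"

end

theory Submission
  imports Defs
begin

text \<open>Averaging over the j-subsets of a uniformly random K-subset is the same as averaging over
  a uniformly random j-subset, because every j-subset lies in equally many K-subsets. Since the
  mean of the maxima over the j-subsets of S is at most the maximum over S, this gives
  monotonicity; since \<open>max w(S) \<le> max w(A) + max w(S - A)\<close> for nonnegative weights, averaging
  over the j-subsets A of a (j+k)-set S gives subadditivity \<open>\<eta>(j + k) \<le> \<eta>(j) + \<eta>(k)\<close>.
  Hence \<open>\<eta>(K) \<le> c \<eta>(k)\<close> whenever K \<le> ck, and for \<open>K = \<lfloor>ah\<rfloor>\<close>, \<open>k = \<lfloor>h\<rfloor>\<close> one can take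
  c \<le> 2a. Parts (i) and (ii) give the linear bound \<open>\<eta>(x) \<le> (1 + 2x/\<mu>) \<eta>(\<mu>)\<close> on [0, n], whose
  expectation under Bin(m, p) with \<open>\<mu> = mp\<close> is \<open>3 \<eta>(\<mu>)\<close>.\<close>

definition subset_mean :: "('a set \<Rightarrow> real) \<Rightarrow> 'a set \<Rightarrow> nat \<Rightarrow> real" where
  "subset_mean f U k = (\<Sum>A | A \<subseteq> U \<and> card A = k. f A) / real (card U choose k)"

lemma subset_mean_mono:
  assumes "\<And>A. A \<subseteq> U \<Longrightarrow> card A = k \<Longrightarrow> f A \<le> g A"
  shows "subset_mean f U k \<le> subset_mean g U k"
  unfolding subset_mean_def using assms by (intro divide_right_mono sum_mono) auto

lemma subset_mean_add:
  "subset_mean (\<lambda>A. f A + g A) U k = subset_mean f U k + subset_mean g U k"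
  by (simp add: subset_mean_def sum.distrib add_divide_distrib)

lemma subset_mean_const:
  assumes "finite U" "k \<le> card U"
  shows "subset_mean (\<lambda>_. c) U k = c"
  using assms by (simp add: subset_mean_def n_subsets)

lemma subset_mean_complement:
  assumes U: "finite U" and k: "k \<le> card U"
  shows "subset_mean (\<lambda>A. f (U - A)) U k = subset_mean f U (card U - k)"
proof -
  have "bij_betw (\<lambda>A. U - A) {A. A \<subseteq> U \<and> card A = k} {A. A \<subseteq> U \<and> card A = card U - k}"
    by (rule bij_betw_byWitness[where f' = "\<lambda>A. U - A"])
       (use U k in \<open>auto simp: card_Diff_subset finite_subset\<close>)
  then have "(\<Sum>A | A \<subseteq> U \<and> card A = k. f (U - A)) = (\<Sum>A | A \<subseteq> U \<and> card A = card U - k. f A)"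
    by (rule sum.reindex_bij_betw)
  then show ?thesis
    using k by (simp add: subset_mean_def binomial_symmetric[of k])
qed

lemma card_supersets_card:
  assumes U: "finite U" and A: "A \<subseteq> U" "card A \<le> K"
  shows "card {S. S \<subseteq> U \<and> card S = K \<and> A \<subseteq> S} = (card U - card A) choose (K - card A)"
proof -
  have fin: "finite B" if "B \<subseteq> U" for B using that U by (rule finite_subset)
  have fA: "finite A" using A(1) by (rule fin)
  have card_Un: "card (B \<union> A) = card B + card A" if "B \<subseteq> U - A" for B
    using that fA by (intro card_Un_disjoint) (auto intro: fin)
  have "bij_betw (\<lambda>S. S - A) {S. S \<subseteq> U \<and> card S = K \<and> A \<subseteq> S}
          {B. B \<subseteq> U - A \<and> card B = K - card A}"
    by (rule bij_betw_byWitness[where f' = "\<lambda>B. B \<union> A"])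
       (use A fA in \<open>auto simp: card_Diff_subset card_Un\<close>)
  then have "card {S. S \<subseteq> U \<and> card S = K \<and> A \<subseteq> S} = card {B. B \<subseteq> U - A \<and> card B = K - card A}"
    by (rule bij_betw_same_card)
  also have "\<dots> = (card U - card A) choose (K - card A)"
    using U A(1) fA by (simp add: n_subsets card_Diff_subset)
  finally show ?thesis .
qed

lemma sum_subsets_of_subsets:
  assumes U: "finite U" and jK: "j \<le> K"
  shows "(\<Sum>S | S \<subseteq> U \<and> card S = K. \<Sum>A | A \<subseteq> S \<and> card A = j. f A)
       = real ((card U - j) choose (K - j)) * (\<Sum>A | A \<subseteq> U \<and> card A = j. f A)"
proof -
  define subsets where "subsets k = {A. A \<subseteq> U \<and> card A = k}" for k
  have fin: "finite (subsets k)" for k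
    unfolding subsets_def by (rule finite_subset[of _ "Pow U"]) (auto simp: U)
  have "(\<Sum>S\<in>subsets K. \<Sum>A | A \<subseteq> S \<and> card A = j. f A)
      = (\<Sum>S\<in>subsets K. \<Sum>A | A \<in> subsets j \<and> A \<subseteq> S. f A)"
    unfolding subsets_def by (intro sum.cong refl arg_cong2[where f = sum]) auto
  also have "\<dots> = (\<Sum>A\<in>subsets j. \<Sum>S | S \<in> subsets K \<and> A \<subseteq> S. f A)"
    by (rule sum.swap_restrict[OF fin fin])
  also have "\<dots> = (\<Sum>A\<in>subsets j. real ((card U - j) choose (K - j)) * f A)"
    using U jK by (intro sum.cong refl) (auto simp: subsets_def card_supersets_card conj_assoc)
  finally show ?thesis
    by (simp add: subsets_def sum_distrib_left)
qed

lemma subset_mean_subset_mean: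
  assumes U: "finite U" and jK: "j \<le> K" and K: "K \<le> card U"
  shows "subset_mean (\<lambda>S. subset_mean f S j) U K = subset_mean f U j"
proof -
  define c where "c = real ((card U - j) choose (K - j))"
  have c_pos: "c > 0"
    unfolding c_def using jK K by simp
  have choose: "real (card U choose K) * real (K choose j) = real (card U choose j) * c"
    unfolding c_def using choose_mult[OF jK K] by (metis of_nat_mult)
  have "(\<Sum>S | S \<subseteq> U \<and> card S = K. subset_mean f S j)
      = (\<Sum>S | S \<subseteq> U \<and> card S = K. \<Sum>A | A \<subseteq> S \<and> card A = j. f A) / real (K choose j)"
    unfolding sum_divide_distrib by (intro sum.cong refl) (simp add: subset_mean_def sum_divide_distrib)
  also have "\<dots> = c * (\<Sum>A | A \<subseteq> U \<and> card A = j. f A) / real (K choose j)"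
    unfolding c_def by (simp add: sum_subsets_of_subsets[OF U jK])
  finally have "subset_mean (\<lambda>S. subset_mean f S j) U K
      = c * (\<Sum>A | A \<subseteq> U \<and> card A = j. f A) / (real (card U choose j) * c)"
    by (simp add: subset_mean_def choose flip: divide_divide_eq_left')
  also have "\<dots> = subset_mean f U j"
    using c_pos by (simp add: subset_mean_def)
  finally show ?thesis .
qed

definition mean_max :: "('a \<Rightarrow> real) \<Rightarrow> 'a set \<Rightarrow> nat \<Rightarrow> real" where
  "mean_max w U k = subset_mean (\<lambda>R. Max (w ` R)) U k"

lemma Max_image_nonneg:
  fixes w :: "'a \<Rightarrow> real"
  assumes "finite A" "A \<noteq> {}" "\<And>x. x \<in> A \<Longrightarrow> 0 \<le> w x"
  shows "0 \<le> Max (w ` A)"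
  using assms by (auto simp: Max_ge_iff)

lemma mean_max_nonneg:
  assumes U: "finite U" and w: "\<And>x. x \<in> U \<Longrightarrow> 0 \<le> w x" and k: "1 \<le> k"
  shows "0 \<le> mean_max w U k"
  unfolding mean_max_def subset_mean_def
proof (intro divide_nonneg_nonneg sum_nonneg)
  fix A assume "A \<in> {A. A \<subseteq> U \<and> card A = k}"
  then show "0 \<le> Max (w ` A)"
    using k by (intro Max_image_nonneg) (auto intro: w rev_finite_subset[OF U])
qed simp

lemma mean_max_le_Max:
  assumes S: "finite S" and j: "1 \<le> j" "j \<le> card S"
  shows "mean_max w S j \<le> Max (w ` S)"
proof -
  have "mean_max w S j \<le> subset_mean (\<lambda>_. Max (w ` S)) S j"
    unfolding mean_max_def using S j by (intro subset_mean_mono Max_mono image_mono) auto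
  also have "\<dots> = Max (w ` S)"
    using S j(2) by (rule subset_mean_const)
  finally show ?thesis .
qed

lemma Max_le_mean_max_add:
  assumes S: "finite S" and card: "card S = j + k" and jk: "1 \<le> j" "1 \<le> k"
    and w: "\<And>x. x \<in> S \<Longrightarrow> 0 \<le> w x"
  shows "Max (w ` S) \<le> mean_max w S j + mean_max w S k"
proof -
  have split: "Max (w ` S) \<le> Max (w ` A) + Max (w ` (S - A))" if A: "A \<subseteq> S" "card A = j" for A
  proof -
    have fA: "finite A"
      using A(1) S by (rule finite_subset)
    have "card (S - A) = k"
      using card_Diff_subset[OF fA A(1)] card A(2) by simp
    then have ne: "A \<noteq> {}" "S - A \<noteq> {}"
      using A(2) jk by (metis card.empty not_one_le_zero)+
    have "w ` S = w ` A \<union> w ` (S - A)"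
      using A(1) by auto
    then have "Max (w ` S) = max (Max (w ` A)) (Max (w ` (S - A)))"
      using S fA ne by (simp add: Max_Un)
    moreover have "0 \<le> Max (w ` A)" "0 \<le> Max (w ` (S - A))"
      using A(1) S fA ne by (auto intro!: Max_image_nonneg w)
    ultimately show ?thesis by linarith
  qed
  have "Max (w ` S) = subset_mean (\<lambda>_. Max (w ` S)) S j"
    using S card by (simp add: subset_mean_const)
  also have "\<dots> \<le> subset_mean (\<lambda>A. Max (w ` A) + Max (w ` (S - A))) S j"
    by (intro subset_mean_mono split)
  also have "\<dots> = mean_max w S j + subset_mean (\<lambda>A. Max (w ` (S - A))) S j"
    by (simp add: subset_mean_add mean_max_def)
  also have "subset_mean (\<lambda>A. Max (w ` (S - A))) S j = mean_max w S k"
    using subset_mean_complement[OF S, of j "\<lambda>R. Max (w ` R)"] card by (simp add: mean_max_def)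
  finally show ?thesis .
qed

lemma mean_max_mono:
  assumes U: "finite U" and jK: "1 \<le> j" "j \<le> K" "K \<le> card U"
  shows "mean_max w U j \<le> mean_max w U K"
proof -
  have "mean_max w U j = subset_mean (\<lambda>S. mean_max w S j) U K"
    unfolding mean_max_def using U jK by (simp add: subset_mean_subset_mean)
  also have "\<dots> \<le> subset_mean (\<lambda>S. Max (w ` S)) U K"
    using jK by (intro subset_mean_mono mean_max_le_Max) (auto intro: rev_finite_subset[OF U])
  finally show ?thesis
    by (simp only: mean_max_def)
qed

lemma mean_max_subadditive:
  assumes U: "finite U" and w: "\<And>x. x \<in> U \<Longrightarrow> 0 \<le> w x"
    and jk: "1 \<le> j" "1 \<le> k" "j + k \<le> card U"
  shows "mean_max w U (j + k) \<le> mean_max w U j + mean_max w U k"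
proof -
  have "mean_max w U (j + k) \<le> subset_mean (\<lambda>S. mean_max w S j + mean_max w S k) U (j + k)"
    unfolding mean_max_def[of w U]
    using jk by (intro subset_mean_mono Max_le_mean_max_add) (auto intro: w rev_finite_subset[OF U])
  also have "\<dots> = mean_max w U j + mean_max w U k"
    unfolding subset_mean_add mean_max_def using U jk by (simp add: subset_mean_subset_mean)
  finally show ?thesis .
qed

lemma mean_max_le_mult:
  assumes U: "finite U" and w: "\<And>x. x \<in> U \<Longrightarrow> 0 \<le> w x"
    and k: "1 \<le> k" "k \<le> card U"
  shows "1 \<le> K \<Longrightarrow> K \<le> c * k \<Longrightarrow> K \<le> card U \<Longrightarrow> mean_max w U K \<le> real c * mean_max w U k"
proof (induction c arbitrary: K)
  case 0
  then show ?case by simp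
next
  case (Suc c)
  have nonneg: "0 \<le> mean_max w U k"
    using U w k(1) by (rule mean_max_nonneg)
  show ?case
  proof (cases "K \<le> k")
    case True
    then have "mean_max w U K \<le> mean_max w U k"
      using Suc.prems k by (intro mean_max_mono U) auto
    moreover have "0 \<le> real c * mean_max w U k"
      using nonneg by simp
    ultimately show ?thesis
      by (simp add: algebra_simps)
  next
    case False
    define K' where "K' = K - k"
    have K: "K = k + K'" "1 \<le> K'"
      using False unfolding K'_def by simp_all
    have "mean_max w U K \<le> mean_max w U k + mean_max w U K'"
      unfolding K(1) using Suc.prems(3) K k(1) by (intro mean_max_subadditive[OF U w]) simp_all
    also have "mean_max w U K' \<le> real c * mean_max w U k"
      using Suc.prems K by (intro Suc.IH) simp_all
    finally show ?thesis
      by (simp add: algebra_simps)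
  qed
qed

lemma eta_eq_mean_max: "1 \<le> a \<Longrightarrow> eta w n a = mean_max w {1..n} (nat \<lfloor>a\<rfloor>)"
  by (simp add: eta_def mean_max_def subset_mean_def Let_def)

lemma nat_floor_le_of_nat: "x \<le> real n \<Longrightarrow> nat \<lfloor>x\<rfloor> \<le> n"
  by (simp add: nat_le_iff floor_le_iff)

lemma eta_nonneg:
  assumes w: "\<And>i. i \<in> {1..n} \<Longrightarrow> 0 \<le> w i"
  shows "0 \<le> eta w n a"
proof (cases "a < 1")
  case True
  then show ?thesis by (simp add: eta_def)
next
  case False
  then have "1 \<le> nat \<lfloor>a\<rfloor>"
    by (intro le_nat_floor) simp
  then have "0 \<le> mean_max w {1..n} (nat \<lfloor>a\<rfloor>)"
    by (intro mean_max_nonneg w) auto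
  with False show ?thesis
    by (simp add: eta_eq_mean_max)
qed

lemma eta_mono:
  assumes w: "\<And>i. i \<in> {1..n} \<Longrightarrow> 0 \<le> w i"
  shows "mono_on {0..real n} (eta w n)"
proof (rule mono_onI)
  fix x y assume "x \<in> {0..real n}" "y \<in> {0..real n}" "x \<le> y"
  then show "eta w n x \<le> eta w n y"
  proof (cases "x < 1")
    case True
    then have "eta w n x = 0"
      by (simp add: eta_def)
    with eta_nonneg[of n w, OF w] show ?thesis
      by simp
  next
    case False
    with \<open>x \<le> y\<close> \<open>y \<in> {0..real n}\<close>
    have "1 \<le> nat \<lfloor>x\<rfloor>" "nat \<lfloor>x\<rfloor> \<le> nat \<lfloor>y\<rfloor>" "nat \<lfloor>y\<rfloor> \<le> n"
      by (auto simp: le_nat_floor floor_mono nat_mono nat_floor_le_of_nat)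
    with False \<open>x \<le> y\<close> show ?thesis
      by (simp add: eta_eq_mean_max mean_max_mono)
  qed
qed

lemma multiple_cover:
  fixes a :: real and k K :: nat
  assumes k: "1 \<le> k" and a: "1 \<le> a" and K: "real K < a * (real k + 1)"
  obtains c where "K \<le> c * k" "real c \<le> 2 * a"
proof
  define c where "c = (K + k - 1) div k"
  have "K + k - 1 < c * k + k"
    unfolding c_def using k mod_less_divisor[of k "K + k - 1"] div_mult_mod_eq[of "K + k - 1" k] by linarith
  then show "K \<le> c * k"
    by linarith
  have "c * k \<le> K + k - 1"
    unfolding c_def by (rule div_times_less_eq_dividend)
  then have "real c * real k \<le> real K + real k - 1"
    using k by (simp add: of_nat_diff flip: of_nat_mult)
  also have "\<dots> < 2 * a * real k"
  proof -
    have "0 \<le> (a - 1) * (real k - 1)"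
      using a k by simp
    then show ?thesis
      using K by (simp add: algebra_simps)
  qed
  finally show "real c \<le> 2 * a"
    by (simp add: mult_less_cancel_right less_imp_le)
qed

lemma eta_scale:
  assumes w: "\<And>i. i \<in> {1..n} \<Longrightarrow> 0 \<le> w i"
    and a: "1 \<le> a" and h: "1 \<le> h" "h \<le> real n / a"
  shows "eta w n (a * h) \<le> 2 * a * eta w n h"
proof -
  define k where "k = nat \<lfloor>h\<rfloor>"
  define K where "K = nat \<lfloor>a * h\<rfloor>"
  have "h \<le> a * h"
    using a h by simp
  moreover have "a * h \<le> real n"
    using a h by (simp add: field_simps)
  ultimately have ah: "1 \<le> a * h" "a * h \<le> real n" "h \<le> real n"
    using h by linarith+
  have k: "1 \<le> k" "k \<le> n"
    unfolding k_def using h ah by (simp_all add: le_nat_floor nat_floor_le_of_nat)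
  have K: "1 \<le> K" "K \<le> n"
    unfolding K_def using h ah by (simp_all add: le_nat_floor nat_floor_le_of_nat)
  have "real K \<le> a * h"
    unfolding K_def using h ah by (intro of_nat_floor) simp
  also have "\<dots> < a * (real k + 1)"
    unfolding k_def using a h by (simp add: of_nat_nat)
  finally obtain c where c: "K \<le> c * k" "real c \<le> 2 * a"
    using multiple_cover k(1) a by blast
  have "eta w n (a * h) = mean_max w {1..n} K"
    unfolding K_def using ah h by (simp add: eta_eq_mean_max)
  also have "\<dots> \<le> real c * mean_max w {1..n} k"
    using k K c(1) by (intro mean_max_le_mult w) simp_all
  also have "\<dots> \<le> 2 * a * mean_max w {1..n} k"
    using c(2) k(1) by (intro mult_right_mono mean_max_nonneg w) simp_all
  also have "mean_max w {1..n} k = eta w n h"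
    unfolding k_def using h by (simp add: eta_eq_mean_max)
  finally show ?thesis .
qed

lemma expectation_binomial_pmf_real:
  assumes p: "p \<in> {0..1}"
  shows "measure_pmf.expectation (binomial_pmf m p) real = real m * p"
proof (cases m)
  case 0
  with p show ?thesis
    by (simp add: expectation_binomial_pmf')
next
  case (Suc m')
  have summand: "real (m choose Suc k) * p ^ Suc k * (1 - p) ^ (m - Suc k) * real (Suc k)
      = real m * p * (real (m' choose k) * p ^ k * (1 - p) ^ (m' - k))" for k
  proof -
    have choose: "real (Suc k) * real (m choose Suc k) = real m * real (m' choose k)"
      unfolding Suc of_nat_mult[symmetric] Suc_times_binomial ..
    have "real (m choose Suc k) * p ^ Suc k * (1 - p) ^ (m - Suc k) * real (Suc k)
        = (real (Suc k) * real (m choose Suc k)) * (p * (p ^ k * (1 - p) ^ (m' - k)))"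
      unfolding Suc power_Suc diff_Suc_Suc by (simp only: ac_simps)
    also have "\<dots> = real m * p * (real (m' choose k) * p ^ k * (1 - p) ^ (m' - k))"
      unfolding choose by (simp only: ac_simps)
    finally show ?thesis .
  qed
  have "measure_pmf.expectation (binomial_pmf m p) real
      = (\<Sum>k\<le>Suc m'. real (m choose k) * p ^ k * (1 - p) ^ (m - k) * real k)"
    using p by (simp add: expectation_binomial_pmf' Suc)
  also have "\<dots> = (\<Sum>k\<le>m'. real (m choose Suc k) * p ^ Suc k * (1 - p) ^ (m - Suc k) * real (Suc k))"
    by (subst sum.atMost_Suc_shift) simp
  also have "\<dots> = real m * p * (\<Sum>k\<le>m'. real (m' choose k) * p ^ k * (1 - p) ^ (m' - k))"
    unfolding summand by (rule sum_distrib_left[symmetric])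
  also have "\<dots> = real m * p"
    using binomial_ring[of p "1 - p" m'] by simp
  finally show ?thesis .
qed

lemma eta_le_linear:
  assumes w: "\<And>i. i \<in> {1..n} \<Longrightarrow> 0 \<le> w i"
    and \<mu>: "1 \<le> \<mu>" "\<mu> \<le> real n" and x: "0 \<le> x" "x \<le> real n"
  shows "eta w n x \<le> eta w n \<mu> + 2 * eta w n \<mu> / \<mu> * x"
proof (cases "x \<le> \<mu>")
  case True
  then have "eta w n x \<le> eta w n \<mu>"
    using \<mu> x by (intro mono_onD[OF eta_mono[of n w, OF w]]) auto
  moreover have "0 \<le> 2 * eta w n \<mu> / \<mu> * x"
    using \<mu> x eta_nonneg[of n w, OF w] by simp
  ultimately show ?thesis
    by linarith
next
  case False
  have "eta w n (x / \<mu> * \<mu>) \<le> 2 * (x / \<mu>) * eta w n \<mu>"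
    using False \<mu> x by (intro eta_scale w) (simp_all add: field_simps)
  moreover have "x / \<mu> * \<mu> = x"
    using \<mu> by simp
  ultimately show ?thesis
    using eta_nonneg[of n w, OF w, of \<mu>] by (simp add: field_simps)
qed

lemma eta_binomial:
  assumes w: "\<And>i. i \<in> {1..n} \<Longrightarrow> 0 \<le> w i"
    and mp: "1 \<le> real m * p" "real m * p \<le> real m" and mn: "m \<le> n"
  shows "measure_pmf.expectation (binomial_pmf m p) (\<lambda>k. eta w n (real k)) \<le> 3 * eta w n (real m * p)"
proof -
  define \<mu> where "\<mu> = real m * p"
  have "m > 0"
    using mp by (cases m) simp_all
  moreover have "0 \<le> p"
    using mp(1) mult_nonneg_nonpos[of "real m" p] by linarith
  ultimately have p: "p \<in> {0..1}"
    using mp(2) by simp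
  have \<mu>: "1 \<le> \<mu>" "\<mu> \<le> real n"
    using mp mn unfolding \<mu>_def by simp_all
  have "measure_pmf.expectation (binomial_pmf m p) (\<lambda>k. eta w n (real k))
      \<le> measure_pmf.expectation (binomial_pmf m p) (\<lambda>k. eta w n \<mu> + 2 * eta w n \<mu> / \<mu> * real k)"
  proof (intro integral_mono_AE AE_pmfI)
    fix k assume "k \<in> set_pmf (binomial_pmf m p)"
    then have "k \<le> m"
      using p by (auto simp: set_pmf_binomial_eq split: if_splits)
    then show "eta w n (real k) \<le> eta w n \<mu> + 2 * eta w n \<mu> / \<mu> * real k"
      using mn \<mu> by (intro eta_le_linear w) simp_all
  qed (use p in simp_all)
  also have "\<dots> = eta w n \<mu> + 2 * eta w n \<mu> / \<mu> * \<mu>"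
    using p by (simp add: expectation_binomial_pmf_real \<mu>_def)
  also have "\<dots> = 3 * eta w n \<mu>"
    using \<mu> by simp
  finally show ?thesis
    unfolding \<mu>_def .
qed

theorem lemma4p1:
  fixes w :: "nat \<Rightarrow> real" and n :: nat
  assumes nonneg: "\<And>i. i \<in> {1..n} \<Longrightarrow> w i \<ge> 0"
  shows "mono_on {0..real n} (eta w n)
    \<and> (\<forall>a h. a \<ge> 1 \<and> 1 \<le> h \<and> h \<le> real n / a \<longrightarrow> eta w n (a * h) \<le> 2 * a * eta w n h)
    \<and> (\<forall>(m::nat) (p::real). 1 \<le> real m * p \<and> real m * p \<le> real m \<and> m \<le> n \<longrightarrow>
         measure_pmf.expectation (binomial_pmf m p) (\<lambda>k. eta w n (real k))
           \<le> 3 * eta w n (real m * p))"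
  using eta_mono[of n w, OF nonneg] eta_scale[of n w, OF nonneg] eta_binomial[of n w, OF nonneg]
  by blast

end
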